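(* Let $\mathbf n=(n_1,\dots,n_k)$ with $n_i\ge0$ integers and $\sum n_i=n$, and set $N_j=n_1+\dots+n_j$ ($N_0=0$). For every $m\in\mathbb N$, substituting $\lambda_{N_{j-1}+i}=\mu_jq^{-2(i-1)}$ for $j=1,\dots,k$, $i=1,\dots,n_j$ into $\vartheta_m(q^{-2},\lambda)$ gives $\vartheta_m(\mathbf n,q^{-2},\mu)$.
   Context: $\hat m=\frac{1-q^{-2m}}{1-q^{-2}}$. For indeterminates $\lambda=(\lambda_1,\dots,\lambda_n)$ and $m\ge1$, $\vartheta_m(q^{-2},\lambda)=\sum_{\ell=1}^n(1-q^{-2})^{\ell-1}\sum_{\mathbf d}\sum_{1\le j_1<\dots<j_\ell\le n}\lambda_{j_1}^{d_1}\cdots\lambda_{j_\ell}^{d_\ell}$ and, for $\mu=(\mu_1,\dots,\mu_k)$, $\vartheta_m(\mathbf n,q^{-2},\mu)=\sum_{\ell=1}^k(1-q^{-2})^{\ell-1}\sum_{\mathbf d}\sum_{1\le i_1<\dots<i_\ell\le k}\hat n_{i_1}\cdots\hat n_{i_\ell}\mu_{i_1}^{d_1}\cdots\mu_{i_\ell}^{d_\ell}$, where in both $\mathbf d=(d_1,\dots,d_\ell)$ runs over $\ell$-tuples of positive integers with sum $m$. *)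

theory Defs
  imports Main
begin

definition qhat :: "'a::field \<Rightarrow> nat \<Rightarrow> 'a" where
  "qhat q m = (1 - inverse (q^2) ^ m) / (1 - inverse (q^2))"

definition comps :: "nat \<Rightarrow> nat \<Rightarrow> nat list set" where
  "comps l m = {d. length d = l \<and> (\<forall>x\<in>set d. 0 < x) \<and> sum_list d = m}"

definition incr :: "nat \<Rightarrow> nat \<Rightarrow> nat list set" where
  "incr l n = {js. length js = l \<and> sorted_wrt (<) js \<and> set js \<subseteq> {1..n}}"

definition theta :: "nat \<Rightarrow> 'a::field \<Rightarrow> nat \<Rightarrow> (nat \<Rightarrow> 'a) \<Rightarrow> 'a" where
  "theta m t n lam = (\<Sum>l=1..n. (1 - t) ^ (l - 1) *
     (\<Sum>d\<in>comps l m. \<Sum>js\<in>incr l n. \<Prod>i<l. lam (js ! i) ^ (d ! i)))"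

definition theta_n :: "nat \<Rightarrow> nat \<Rightarrow> (nat \<Rightarrow> nat) \<Rightarrow> 'a::field \<Rightarrow> (nat \<Rightarrow> 'a) \<Rightarrow> 'a" where
  "theta_n m k nv q mu = (\<Sum>l=1..k. (1 - inverse (q^2)) ^ (l - 1) *
     (\<Sum>d\<in>comps l m. \<Sum>is\<in>incr l k.
        \<Prod>i<l. qhat q (nv (is ! i)) * mu (is ! i) ^ (d ! i)))"

end

theory Submission
  imports Defs "HOL-Computational_Algebra.Formal_Power_Series"
begin

text \<open>
  Put \<open>t = q\<^sup>-\<^sup>2\<close> and \<open>s = 1 - t\<close>. For \<open>m \<ge> 1\<close>, \<open>s \<cdot> \<vartheta>\<^sub>m(t, \<lambda>)\<close> is the coefficient of \<open>X\<^sup>m\<close> in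
  \<open>\<Prod>\<^sub>j (1 - t \<lambda>\<^sub>j X) / (1 - \<lambda>\<^sub>j X) = \<Prod>\<^sub>j (1 + s \<Sum>\<^sub>e\<^sub>\<ge>\<^sub>1 \<lambda>\<^sub>j\<^sup>e X\<^sup>e)\<close>: expanding the product
  yields one term per increasing index tuple and composition of \<open>m\<close>. In the same way
  \<open>s \<cdot> \<vartheta>\<^sub>m(n, t, \<mu>)\<close> is the coefficient of \<open>X\<^sup>m\<close> in \<open>\<Prod>\<^sub>j (1 + s n\<^sub>j\<close>-hat \<open>\<Sum>\<^sub>e\<^sub>\<ge>\<^sub>1 \<mu>\<^sub>j\<^sup>e X\<^sup>e)\<close>,
  which is \<open>\<Prod>\<^sub>j (1 - t\<^bsup>n\<^sub>j\<^esup> \<mu>\<^sub>j X) / (1 - \<mu>\<^sub>j X)\<close> since \<open>s n\<^sub>j\<close>-hat \<open>= 1 - t\<^bsup>n\<^sub>j\<^esup>\<close>. After the substitution \<open>\<lambda> = \<mu>\<^sub>j t\<^bsup>i-1\<^esup>\<close>,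
  the \<open>n\<^sub>j\<close> factors of the \<open>j\<close>-th block of the first product telescope to the \<open>j\<close>-th
  factor of the second, and \<open>s \<noteq> 0\<close> because \<open>q\<^sup>2 \<noteq> 1\<close>.
\<close>

definition geom_tail :: "'a::field \<Rightarrow> 'a fps" where
  "geom_tail c = Abs_fps (\<lambda>e. if e = 0 then 0 else c ^ e)"

text \<open>The power series of \<open>(1 - (1 - a) c X) / (1 - c X)\<close>.\<close>
definition gen_factor :: "'a::field \<Rightarrow> 'a \<Rightarrow> 'a fps" where
  "gen_factor a c = 1 + fps_const a * geom_tail c"

lemma geom_tail_times: "(1 - fps_const c * fps_X) * geom_tail c = fps_const c * fps_X"
proof (rule fps_ext)
  fix e
  show "fps_nth ((1 - fps_const c * fps_X) * geom_tail c) e = fps_nth (fps_const c * fps_X) e"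
    by (cases e) (auto simp: algebra_simps geom_tail_def)
qed

lemma gen_factor_times:
  "(1 - fps_const c * fps_X) * gen_factor a c = 1 - fps_const ((1 - a) * c) * fps_X"
proof -
  have "(1 - fps_const c * fps_X) * gen_factor a c
      = (1 - fps_const c * fps_X) + fps_const a * ((1 - fps_const c * fps_X) * geom_tail c)"
    unfolding gen_factor_def by (simp add: algebra_simps)
  then show ?thesis
    unfolding geom_tail_times by (simp add: fps_eq_iff algebra_simps)
qed

lemma one_minus_X_nonzero: "1 - fps_const (c::'a::field) * fps_X \<noteq> 0"
proof
  assume "1 - fps_const c * fps_X = 0"
  then have "fps_nth (1 - fps_const c * fps_X) 0 = 0" by simp
  then show False by simp
qed

lemma gen_factor_unique:
  assumes "(1 - fps_const c * fps_X) * F = 1 - fps_const ((1 - a) * c) * fps_X"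
  shows "F = gen_factor a c"
  using assms gen_factor_times[of c a] one_minus_X_nonzero[of c] mult_left_cancel by metis

lemma prod_gen_factor_geometric:
  fixes t mu :: "'a::field"
  shows "(\<Prod>i=1..n. gen_factor (1 - t) (mu * t ^ (i - 1))) = gen_factor (1 - t ^ n) mu"
proof (rule gen_factor_unique)
  show "(1 - fps_const mu * fps_X) * (\<Prod>i=1..n. gen_factor (1 - t) (mu * t ^ (i - 1)))
      = 1 - fps_const ((1 - (1 - t ^ n)) * mu) * fps_X"
  proof (induction n)
    case 0
    then show ?case by simp
  next
    case (Suc n)
    have "(1 - fps_const mu * fps_X) * (\<Prod>i=1..Suc n. gen_factor (1 - t) (mu * t ^ (i - 1)))
        = (1 - fps_const (mu * t ^ n) * fps_X) * gen_factor (1 - t) (mu * t ^ n)"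
      using Suc.IH by (simp add: mult.assoc [symmetric] mult.commute)
    also have "\<dots> = 1 - fps_const ((1 - (1 - t ^ Suc n)) * mu) * fps_X"
      by (simp only: gen_factor_times) (simp add: algebra_simps)
    finally show ?case .
  qed
qed

lemma prod_atLeast1_atMost_sum_blocks:
  fixes nv :: "nat \<Rightarrow> nat" and f :: "nat \<Rightarrow> 'a::comm_monoid_mult"
  shows "(\<Prod>j=1..(\<Sum>r=1..k. nv r). f j) = (\<Prod>j=1..k. \<Prod>i=1..nv j. f ((\<Sum>r=1..j-1. nv r) + i))"
proof (induction k)
  case 0
  then show ?case by simp
next
  case (Suc k)
  let ?S = "\<Sum>r=1..k. nv r"
  have "(\<Prod>j=1..?S + nv (Suc k). f j) = (\<Prod>j=1..?S. f j) * (\<Prod>j=?S+1..?S + nv (Suc k). f j)"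
    by (rule prod.ub_add_nat) simp
  also have "(\<Prod>j=?S+1..?S + nv (Suc k). f j) = (\<Prod>i=1..nv (Suc k). f (?S + i))"
    using prod.shift_bounds_cl_nat_ivl[of f 1 ?S "nv (Suc k)"] by (simp add: add.commute)
  finally show ?case using Suc by simp
qed

lemma comps_0: "comps 0 m = (if m = 0 then {[]} else {})"
  by (auto simp: comps_def)

lemma finite_comps: "finite (comps l m)"
proof (rule finite_subset)
  show "comps l m \<subseteq> {xs. set xs \<subseteq> {0..m} \<and> length xs = l}"
    by (auto simp: comps_def member_le_sum_list)
qed (simp add: finite_lists_length_eq)

lemma comps_Suc: "comps (Suc l) m = (\<lambda>(e, d). e # d) ` Sigma {1..m} (\<lambda>e. comps l (m - e))"
proof (rule set_eqI, rule iffI)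
  fix d assume d: "d \<in> comps (Suc l) m"
  then obtain e d' where "d = e # d'" by (cases d) (auto simp: comps_def)
  with d show "d \<in> (\<lambda>(e, d). e # d) ` Sigma {1..m} (\<lambda>e. comps l (m - e))"
    by (auto simp: comps_def image_iff intro!: bexI[of _ "(e, d')"])
qed (auto simp: comps_def)

lemma sum_comps_Suc:
  "(\<Sum>d\<in>comps (Suc l) m. f d) = (\<Sum>e=1..m. \<Sum>d\<in>comps l (m - e). f (e # d))"
proof -
  have "(\<Sum>d\<in>comps (Suc l) m. f d) = (\<Sum>(e, d)\<in>Sigma {1..m} (\<lambda>e. comps l (m - e)). f (e # d))"
    unfolding comps_Suc by (subst sum.reindex) (auto simp: inj_on_def case_prod_unfold)
  also have "\<dots> = (\<Sum>e=1..m. \<Sum>d\<in>comps l (m - e). f (e # d))"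
    by (rule sum.Sigma[symmetric]) (auto simp: finite_comps)
  finally show ?thesis .
qed

lemma fps_nth_prod_list_geom_tail:
  "fps_nth (prod_list (map (\<lambda>j. fps_const (a j) * geom_tail (c j)) js)) m =
   (\<Sum>d\<in>comps (length js) m. \<Prod>i<length js. a (js ! i) * c (js ! i) ^ (d ! i))"
proof (induction js arbitrary: m)
  case Nil
  then show ?case by (simp add: comps_0)
next
  case (Cons x js)
  let ?P = "prod_list (map (\<lambda>j. fps_const (a j) * geom_tail (c j)) js)"
  let ?l = "length js"
  have "fps_nth ((fps_const (a x) * geom_tail (c x)) * ?P) m
      = (\<Sum>i=0..m. fps_nth (fps_const (a x) * geom_tail (c x)) i * fps_nth ?P (m - i))"
    by (rule fps_mult_nth)
  also have "\<dots> = (\<Sum>e=1..m. (a x * c x ^ e) * fps_nth ?P (m - e))"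
    by (subst sum.atLeast_Suc_atMost) (auto simp: geom_tail_def intro!: sum.cong)
  also have "\<dots> = (\<Sum>e=1..m. \<Sum>d\<in>comps ?l (m - e).
                    (a x * c x ^ e) * (\<Prod>i<?l. a (js ! i) * c (js ! i) ^ (d ! i)))"
    by (simp add: Cons sum_distrib_left)
  also have "\<dots> = (\<Sum>d\<in>comps (Suc ?l) m. \<Prod>i<Suc ?l. a ((x # js) ! i) * c ((x # js) ! i) ^ (d ! i))"
    by (simp only: sum_comps_Suc prod.lessThan_Suc_shift) simp
  finally show ?case by simp
qed

lemma finite_incr: "finite (incr l K)"
proof (rule finite_subset)
  show "incr l K \<subseteq> {xs. set xs \<subseteq> {1..K} \<and> length xs = l}"
    by (auto simp: incr_def)
qed (simp add: finite_lists_length_eq)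

lemma incr_distinct_card: "js \<in> incr l K \<Longrightarrow> distinct js \<and> card (set js) = l"
  by (auto simp: incr_def strict_sorted_iff distinct_card)

lemma Pow_atLeastAtMost_eq_incr: "Pow {1..K} = (\<Union>l\<in>{0..K}. set ` incr l K)"
proof (rule set_eqI, rule iffI)
  fix J assume J: "J \<in> Pow {1..K}"
  then have "finite J" "card J \<le> K"
    using card_mono[of "{1..K}" J] finite_subset by auto
  moreover have "sorted_list_of_set J \<in> incr (card J) K"
    using J \<open>finite J\<close> by (auto simp: incr_def)
  ultimately show "J \<in> (\<Union>l\<in>{0..K}. set ` incr l K)"
    by (auto intro!: bexI[of _ "card J"] image_eqI[of _ _ "sorted_list_of_set J"])
qed (auto simp: incr_def)

lemma sum_Pow_atLeastAtMost_incr: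
  fixes g :: "nat set \<Rightarrow> 'a::comm_monoid_add"
  shows "(\<Sum>J\<in>Pow {1..K}. g J) = (\<Sum>l=0..K. \<Sum>js\<in>incr l K. g (set js))"
proof -
  have inj: "inj_on set (incr l K)" for l
    by (auto simp: inj_on_def incr_def strict_sorted_iff intro: sorted_distinct_set_unique)
  have "(\<Sum>J\<in>Pow {1..K}. g J) = (\<Sum>l=0..K. \<Sum>J\<in>set ` incr l K. g J)"
    unfolding Pow_atLeastAtMost_eq_incr
    by (rule sum.UNION_disjoint) (auto simp: finite_incr dest!: incr_distinct_card)
  also have "\<dots> = (\<Sum>l=0..K. \<Sum>js\<in>incr l K. g (set js))"
    by (simp add: sum.reindex inj)
  finally show ?thesis .
qed

lemma prod_one_plus_eq_sum_incr:
  fixes Y :: "nat \<Rightarrow> 'a::comm_semiring_1"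
  shows "(\<Prod>j=1..K. 1 + Y j) = (\<Sum>l=0..K. \<Sum>js\<in>incr l K. prod_list (map Y js))"
proof -
  have "(\<Prod>j=1..K. 1 + Y j) = (\<Sum>J\<in>Pow {1..K}. \<Prod>j\<in>J. Y j)"
    by (subst add.commute) (simp add: prod_add)
  also have "\<dots> = (\<Sum>l=0..K. \<Sum>js\<in>incr l K. \<Prod>j\<in>set js. Y j)"
    by (rule sum_Pow_atLeastAtMost_incr)
  also have "\<dots> = (\<Sum>l=0..K. \<Sum>js\<in>incr l K. prod_list (map Y js))"
    by (intro sum.cong refl) (simp add: prod.distinct_set_conv_list incr_distinct_card)
  finally show ?thesis .
qed

lemma fps_nth_prod_gen_factor:
  fixes s :: "'a::field" and w c :: "nat \<Rightarrow> 'a"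
  assumes "m \<ge> 1"
  shows "fps_nth (\<Prod>j=1..K. gen_factor (s * w j) (c j)) m =
    s * (\<Sum>l=1..K. s ^ (l - 1) *
      (\<Sum>d\<in>comps l m. \<Sum>js\<in>incr l K. \<Prod>i<l. w (js ! i) * c (js ! i) ^ (d ! i)))"
proof -
  define theta_w where "theta_w l = (\<Sum>d\<in>comps l m. \<Sum>js\<in>incr l K. \<Prod>i<l. w (js ! i) * c (js ! i) ^ (d ! i))"
    for l
  have "fps_nth (\<Prod>j=1..K. gen_factor (s * w j) (c j)) m
      = (\<Sum>l=0..K. \<Sum>js\<in>incr l K. \<Sum>d\<in>comps l m. \<Prod>i<l. (s * w (js ! i)) * c (js ! i) ^ (d ! i))"
    unfolding gen_factor_def prod_one_plus_eq_sum_incr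
    by (simp add: fps_sum_nth fps_nth_prod_list_geom_tail incr_def)
  also have "\<dots> = (\<Sum>l=0..K. s ^ l * theta_w l)"
    by (intro sum.cong refl)
       (simp add: theta_w_def prod.distrib mult.assoc sum_distrib_left sum.swap[of _ "incr _ _"])
  also have "\<dots> = (\<Sum>l=1..K. s * (s ^ (l - 1) * theta_w l))"
    using assms by (auto simp: sum.atLeast_Suc_atMost theta_w_def comps_0 intro!: sum.cong
                         simp flip: power_Suc)
  finally show ?thesis
    by (simp add: theta_w_def sum_distrib_left)
qed

theorem proposition4p5:
  fixes q :: "'a::field" and mu lam :: "nat \<Rightarrow> 'a"
    and nv :: "nat \<Rightarrow> nat" and k n m :: nat
  assumes "q \<noteq> 0" and "q ^ 2 \<noteq> 1"
    and "m \<ge> 1"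
    and "n = (\<Sum>r=1..k. nv r)"
    and "\<forall>j\<in>{1..k}. \<forall>i\<in>{1..nv j}.
           lam ((\<Sum>r=1..j-1. nv r) + i) = mu j * inverse (q^2) ^ (i - 1)"
  shows "theta m (inverse (q^2)) n lam = theta_n m k nv q mu"
proof -
  define t where "t = inverse (q^2)"
  have s_nonzero: "1 - t \<noteq> 0"
    using assms(2) by (auto simp: t_def field_simps)
  have "(\<Prod>j=1..n. gen_factor ((1 - t) * 1) (lam j))
      = (\<Prod>j=1..k. \<Prod>i=1..nv j. gen_factor (1 - t) (lam ((\<Sum>r=1..j-1. nv r) + i)))"
    unfolding assms(4) mult_1_right by (rule prod_atLeast1_atMost_sum_blocks)
  also have "\<dots> = (\<Prod>j=1..k. \<Prod>i=1..nv j. gen_factor (1 - t) (mu j * t ^ (i - 1)))"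
    using assms(5) by (auto simp: t_def intro!: prod.cong)
  also have "\<dots> = (\<Prod>j=1..k. gen_factor (1 - t ^ nv j) (mu j))"
    by (simp only: prod_gen_factor_geometric)
  also have "\<dots> = (\<Prod>j=1..k. gen_factor ((1 - t) * qhat q (nv j)) (mu j))"
    using s_nonzero by (simp add: qhat_def t_def)
  moreover have "fps_nth (\<Prod>j=1..n. gen_factor ((1 - t) * 1) (lam j)) m = (1 - t) * theta m t n lam"
    unfolding fps_nth_prod_gen_factor[OF assms(3)] theta_def by simp
  moreover have "fps_nth (\<Prod>j=1..k. gen_factor ((1 - t) * qhat q (nv j)) (mu j)) m
      = (1 - t) * theta_n m k nv q mu"
    unfolding fps_nth_prod_gen_factor[OF assms(3)] theta_n_def t_def by simp
  ultimately have "(1 - t) * theta m t n lam = (1 - t) * theta_n m k nv q mu"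
    by simp
  then show ?thesis
    using s_nonzero by (simp add: t_def)
qed

end
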